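(* Let $L\ge 3$ be an integer and $\lambda>0$. For every $\bm a=a_1\cdots a_L\in\{0,1\}^L$ with $\mathrm{wt}(\bm a)=2$, let $\Lambda(\bm a)$ be the largest eigenvalue of the operator $\hat P_{\bm a}(\hat\Pi^{(\mathrm{ph})}_{\bm a}-\lambda\hat\Pi)\hat P_{\bm a}$ restricted to the two-dimensional subspace $\mathrm{span}\{|i\rangle: a_i=1\}$, and let $\Omega^{(1)}_+(\lambda):=\max_{\bm a:\,\mathrm{wt}(\bm a)=2}\Lambda(\bm a)$. Then $$\Omega^{(1)}_+(\lambda)=\frac{3-2\lambda+\sqrt{1+2\lambda^2}}{4},$$ and this quantity is non-negative if $\lambda\le 3+\sqrt5$.
   Context: Work in $\mathbb C^L$ with orthonormal basis $\{|1\rangle,\dots,|L\rangle\}$; $\hat P(|\psi\rangle)=|\psi\rangle\langle\psi|$ and $\delta$ is the Kronecker delta. For $\bm a\in\{0,1\}^L$, $\mathrm{wt}(\bm a)$ is the number of $1$'s. $\hat\Pi$ is the real symmetric tridiagonal $L\times L$ matrix with $\langle i|\hat\Pi|i\rangle=1/2$ for $1\le i\le L$, $\langle i|\hat\Pi|i+1\rangle=\langle i+1|\hat\Pi|i\rangle=-1/(2\sqrt2)$ for $i\in\{1,L-1\}$, and $\langle i|\hat\Pi|i+1\rangle=\langle i+1|\hat\Pi|i\rangle=-1/4$ for $2\le i\le L-2$ (all other entries zero). For $\bm a\in\{0,1\}^L$, $\hat\Pi^{(\mathrm{ph})}_{\bm a}$ is the diagonal operator $$\hat\Pi^{(\mathrm{ph})}_{\bm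 a}=\delta_{a_2,1}\hat P(|1\rangle)+\sum_{i=2}^{L-1}\frac{\delta_{a_{i-1},1}+\delta_{a_{i+1},1}}{2}\hat P(|i\rangle)+\delta_{a_{L-1},1}\hat P(|L\rangle),$$ and $\hat P_{\bm a}=\sum_{i=1}^L\delta_{a_i,1}\hat P(|i\rangle)$. *)

theory Defs
  imports Complex_Main
begin

text \<open>Operators on C^L (real symmetric here) are represented as matrices
  nat => nat => real indexed by 1..L; vectors as nat => real supported on 1..L.\<close>

definition bitstrings :: "nat \<Rightarrow> (nat \<Rightarrow> nat) set" where
  "bitstrings L = {a. (\<forall>i. a i \<in> {0,1}) \<and> (\<forall>i. i \<notin> {1..L} \<longrightarrow> a i = 0)}"

definition wt :: "nat \<Rightarrow> (nat \<Rightarrow> nat) \<Rightarrow> nat" where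
  "wt L a = card {i \<in> {1..L}. a i = 1}"

definition delta :: "nat \<Rightarrow> nat \<Rightarrow> real" where
  "delta x y = (if x = y then 1 else 0)"

definition mmul :: "nat \<Rightarrow> (nat \<Rightarrow> nat \<Rightarrow> real) \<Rightarrow> (nat \<Rightarrow> nat \<Rightarrow> real) \<Rightarrow> (nat \<Rightarrow> nat \<Rightarrow> real)" where
  "mmul L A B = (\<lambda>i j. \<Sum>k=1..L. A i k * B k j)"

definition mvec :: "nat \<Rightarrow> (nat \<Rightarrow> nat \<Rightarrow> real) \<Rightarrow> (nat \<Rightarrow> real) \<Rightarrow> (nat \<Rightarrow> real)" where
  "mvec L A v = (\<lambda>i. if i \<in> {1..L} then (\<Sum>j=1..L. A i j * v j) else 0)"

definition PiOp :: "nat \<Rightarrow> nat \<Rightarrow> nat \<Rightarrow> real" where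
  "PiOp L i j =
     (if i \<in> {1..L} \<and> j \<in> {1..L} then
        (if i = j then 1/2
         else if (j = i + 1 \<or> i = j + 1) \<and> min i j \<in> {1, L - 1} then - 1 / (2 * sqrt 2)
         else if (j = i + 1 \<or> i = j + 1) \<and> 2 \<le> min i j \<and> min i j \<le> L - 2 then - 1/4
         else 0)
      else 0)"

definition PiPh :: "nat \<Rightarrow> (nat \<Rightarrow> nat) \<Rightarrow> nat \<Rightarrow> nat \<Rightarrow> real" where
  "PiPh L a i j =
     (if i = j \<and> i \<in> {1..L} then
        (if i = 1 then delta (a 2) 1
         else if i = L then delta (a (L - 1)) 1
         else (delta (a (i - 1)) 1 + delta (a (i + 1)) 1) / 2)
      else 0)"

definition Pa :: "nat \<Rightarrow> (nat \<Rightarrow> nat) \<Rightarrow> nat \<Rightarrow> nat \<Rightarrow> real" where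
  "Pa L a i j = (if i = j \<and> i \<in> {1..L} then delta (a i) 1 else 0)"

definition Hop :: "nat \<Rightarrow> real \<Rightarrow> (nat \<Rightarrow> nat) \<Rightarrow> nat \<Rightarrow> nat \<Rightarrow> real" where
  "Hop L lam a = mmul L (Pa L a) (mmul L (\<lambda>i j. PiPh L a i j - lam * PiOp L i j) (Pa L a))"

definition subsp :: "(nat \<Rightarrow> nat) \<Rightarrow> (nat \<Rightarrow> real) set" where
  "subsp a = {v. \<forall>k. a k \<noteq> 1 \<longrightarrow> v k = 0}"

text \<open>Eigenvalues of the operator restricted to the subspace (which it leaves invariant).\<close>
definition restr_eigenvalues :: "nat \<Rightarrow> real \<Rightarrow> (nat \<Rightarrow> nat) \<Rightarrow> real set" where
  "restr_eigenvalues L lam a =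
     {\<mu>. \<exists>v \<in> subsp a. v \<noteq> (\<lambda>_. 0) \<and> mvec L (Hop L lam a) v = (\<lambda>i. \<mu> * v i)}"

definition LambdaMax :: "nat \<Rightarrow> real \<Rightarrow> (nat \<Rightarrow> nat) \<Rightarrow> real" where
  "LambdaMax L lam a = Max (restr_eigenvalues L lam a)"

definition Omega1 :: "nat \<Rightarrow> real \<Rightarrow> real" where
  "Omega1 L lam = Max {LambdaMax L lam a | a. a \<in> bitstrings L \<and> wt L a = 2}"

end

theory Submission
  imports Defs "HOL-Library.FuncSet"
begin

text \<open>For a string supported on \<open>{p, q}\<close> the compressed operator is the symmetric
  \<open>2 \<times> 2\<close> block \<open>[\<alpha> \<beta>; \<beta> \<gamma>]\<close> of \<open>\<Pi>\<^sup>p\<^sup>h\<^sub>a - \<lambda> \<Pi>\<close> on \<open>{p, q}\<close>, whose largest eigenvalue is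
  \<open>(\<alpha> + \<gamma>)/2 + sqrt (((\<alpha> - \<gamma>)/2)^2 + \<beta>^2)\<close>. The diagonal entries are the phonon terms minus
  \<open>\<lambda>/2\<close>; the phonon terms vanish unless the sites are adjacent and then sum to at most \<open>3/2\<close>,
  since for \<open>L \<ge> 3\<close> at most one of the two sites is an end of the chain. The off-diagonal
  entry has square at most \<open>\<lambda>^2/8\<close>. The boundary pair \<open>{1, 2}\<close> attains all three bounds at once.\<close>

definition unprojected_Hop :: "nat \<Rightarrow> real \<Rightarrow> (nat \<Rightarrow> nat) \<Rightarrow> nat \<Rightarrow> nat \<Rightarrow> real" where
  "unprojected_Hop L lam a i j = PiPh L a i j - lam * PiOp L i j"

lemma mmul_Pa_left: "mmul L (Pa L a) B i j = (if i \<in> {1..L} \<and> a i = 1 then B i j else 0)"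
proof -
  have "mmul L (Pa L a) B i j = (\<Sum>k\<in>{1..L}. if k = i then (if i \<in> {1..L} \<and> a i = 1 then B i j else 0) else 0)"
    unfolding mmul_def Pa_def delta_def by (rule sum.cong) auto
  then show ?thesis by simp
qed

lemma mmul_Pa_right: "mmul L B (Pa L a) i j = (if j \<in> {1..L} \<and> a j = 1 then B i j else 0)"
proof -
  have "mmul L B (Pa L a) i j = (\<Sum>k\<in>{1..L}. if k = j then (if j \<in> {1..L} \<and> a j = 1 then B i j else 0) else 0)"
    unfolding mmul_def Pa_def delta_def by (rule sum.cong) auto
  then show ?thesis by simp
qed

lemma Hop_eq_compression:
  "Hop L lam a i j =
     (if i \<in> {1..L} \<and> j \<in> {1..L} \<and> a i = 1 \<and> a j = 1 then unprojected_Hop L lam a i j else 0)"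
  unfolding Hop_def mmul_Pa_left mmul_Pa_right unprojected_Hop_def by auto

lemma unprojected_Hop_sym: "unprojected_Hop L lam a i j = unprojected_Hop L lam a j i"
proof -
  have "PiOp L i j = PiOp L j i" unfolding PiOp_def by (auto simp: min.commute)
  moreover have "PiPh L a i j = PiPh L a j i" unfolding PiPh_def by auto
  ultimately show ?thesis unfolding unprojected_Hop_def by simp
qed

lemma sym2_eigenvalue_iff_char_poly:
  fixes \<alpha> \<beta> \<gamma> \<mu> :: real
  shows "(\<exists>x y. (x \<noteq> 0 \<or> y \<noteq> 0) \<and> \<alpha>*x + \<beta>*y = \<mu>*x \<and> \<beta>*x + \<gamma>*y = \<mu>*y)
     \<longleftrightarrow> (\<alpha> - \<mu>) * (\<gamma> - \<mu>) = \<beta>\<^sup>2"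
proof
  assume "\<exists>x y. (x \<noteq> 0 \<or> y \<noteq> 0) \<and> \<alpha>*x + \<beta>*y = \<mu>*x \<and> \<beta>*x + \<gamma>*y = \<mu>*y"
  then obtain x y where nz: "x \<noteq> 0 \<or> y \<noteq> 0"
    and e1: "\<alpha>*x + \<beta>*y = \<mu>*x" and e2: "\<beta>*x + \<gamma>*y = \<mu>*y" by blast
  \<comment> \<open>Cramer's rule: the characteristic polynomial annihilates both coordinates.\<close>
  have "((\<alpha>-\<mu>)*(\<gamma>-\<mu>) - \<beta>\<^sup>2) * x = (\<gamma>-\<mu>)*(\<alpha>*x + \<beta>*y - \<mu>*x) - \<beta>*(\<beta>*x + \<gamma>*y - \<mu>*y)"
    and "((\<alpha>-\<mu>)*(\<gamma>-\<mu>) - \<beta>\<^sup>2) * y = (\<alpha>-\<mu>)*(\<beta>*x + \<gamma>*y - \<mu>*y) - \<beta>*(\<alpha>*x + \<beta>*y - \<mu>*x)"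
    by (simp_all add: algebra_simps power2_eq_square)
  with e1 e2 nz show "(\<alpha> - \<mu>) * (\<gamma> - \<mu>) = \<beta>\<^sup>2" by auto
next
  assume char: "(\<alpha> - \<mu>) * (\<gamma> - \<mu>) = \<beta>\<^sup>2"
  show "\<exists>x y. (x \<noteq> 0 \<or> y \<noteq> 0) \<and> \<alpha>*x + \<beta>*y = \<mu>*x \<and> \<beta>*x + \<gamma>*y = \<mu>*y"
  proof (cases "\<beta> = 0")
    case True
    with char have "\<mu> = \<alpha> \<or> \<mu> = \<gamma>" by auto
    then show ?thesis
    proof
      assume "\<mu> = \<alpha>"
      with True show ?thesis by (intro exI[of _ 1] exI[of _ 0]) auto
    next
      assume "\<mu> = \<gamma>"
      with True show ?thesis by (intro exI[of _ 0] exI[of _ 1]) auto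
    qed
  next
    case False
    with char show ?thesis
      by (intro exI[of _ \<beta>] exI[of _ "\<mu> - \<alpha>"]) (auto simp: algebra_simps power2_eq_square)
  qed
qed

lemma sym2_eigenvalues:
  fixes \<alpha> \<beta> \<gamma> :: real
  defines "r \<equiv> sqrt (((\<alpha> - \<gamma>) / 2)\<^sup>2 + \<beta>\<^sup>2)"
  shows "{\<mu>. \<exists>x y. (x \<noteq> 0 \<or> y \<noteq> 0) \<and> \<alpha>*x + \<beta>*y = \<mu>*x \<and> \<beta>*x + \<gamma>*y = \<mu>*y}
     = {(\<alpha> + \<gamma>) / 2 - r, (\<alpha> + \<gamma>) / 2 + r}"
proof -
  have r2: "r\<^sup>2 = ((\<alpha> - \<gamma>) / 2)\<^sup>2 + \<beta>\<^sup>2" unfolding r_def by simp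
  have "(\<alpha> - \<mu>) * (\<gamma> - \<mu>) = \<beta>\<^sup>2 \<longleftrightarrow> \<mu> = (\<alpha> + \<gamma>) / 2 - r \<or> \<mu> = (\<alpha> + \<gamma>) / 2 + r" for \<mu>
  proof -
    have "(\<alpha> - \<mu>) * (\<gamma> - \<mu>) - \<beta>\<^sup>2 = (\<mu> - (\<alpha> + \<gamma>) / 2)\<^sup>2 - r\<^sup>2"
      unfolding r2 by (simp add: field_simps power2_eq_square)
    then have "(\<alpha> - \<mu>) * (\<gamma> - \<mu>) = \<beta>\<^sup>2 \<longleftrightarrow> (\<mu> - (\<alpha> + \<gamma>) / 2)\<^sup>2 = r\<^sup>2" by auto
    also have "\<dots> \<longleftrightarrow> \<mu> - (\<alpha> + \<gamma>) / 2 = r \<or> \<mu> - (\<alpha> + \<gamma>) / 2 = - r"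
      by (rule power2_eq_iff)
    finally show ?thesis by linarith
  qed
  then show ?thesis unfolding sym2_eigenvalue_iff_char_poly by blast
qed

lemma mvec_Hop_two_sites:
  assumes supp: "\<And>i. a i = 1 \<longleftrightarrow> i = p \<or> i = q" and "p \<noteq> q" "p \<in> {1..L}" "q \<in> {1..L}"
    and v: "v \<in> subsp a"
  shows "mvec L (Hop L lam a) v =
    (\<lambda>i. if i = p \<or> i = q
         then unprojected_Hop L lam a i p * v p + unprojected_Hop L lam a i q * v q else 0)"
proof
  fix i
  have vz: "v j = 0" if "j \<noteq> p" "j \<noteq> q" for j using v that supp unfolding subsp_def by auto
  show "mvec L (Hop L lam a) v i = (if i = p \<or> i = q
         then unprojected_Hop L lam a i p * v p + unprojected_Hop L lam a i q * v q else 0)"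
  proof (cases "i \<in> {1..L}")
    case True
    have "(\<Sum>j=1..L. Hop L lam a i j * v j) = (\<Sum>j\<in>{p,q}. Hop L lam a i j * v j)"
      by (rule sum.mono_neutral_right) (use assms(2-4) vz in auto)
    also have "\<dots> = Hop L lam a i p * v p + Hop L lam a i q * v q" using \<open>p \<noteq> q\<close> by simp
    finally show ?thesis using True assms(1-4) unfolding mvec_def Hop_eq_compression by auto
  qed (use assms(3,4) in \<open>auto simp: mvec_def\<close>)
qed

lemma restr_eigenvalues_two_sites:
  fixes lam :: real
  assumes supp: "\<And>i. a i = 1 \<longleftrightarrow> i = p \<or> i = q" and "p \<noteq> q" "p \<in> {1..L}" "q \<in> {1..L}"
  defines "H \<equiv> unprojected_Hop L lam a"
  shows "restr_eigenvalues L lam a =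
    {\<mu>. \<exists>x y. (x \<noteq> 0 \<or> y \<noteq> 0) \<and> H p p * x + H p q * y = \<mu> * x \<and> H p q * x + H q q * y = \<mu> * y}"
proof (intro set_eqI iffI)
  have sym: "H q p = H p q" unfolding H_def by (rule unprojected_Hop_sym)
  fix \<mu>
  {
    assume "\<mu> \<in> restr_eigenvalues L lam a"
    then obtain v where v: "v \<in> subsp a" "v \<noteq> (\<lambda>_. 0)" and eig: "mvec L (Hop L lam a) v = (\<lambda>i. \<mu> * v i)"
      unfolding restr_eigenvalues_def by blast
    have "v j = 0" if "j \<noteq> p" "j \<noteq> q" for j using v(1) that supp unfolding subsp_def by auto
    with v(2) have "v p \<noteq> 0 \<or> v q \<noteq> 0" by fastforce
    moreover have "H p p * v p + H p q * v q = \<mu> * v p" "H p q * v p + H q q * v q = \<mu> * v q"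
      using fun_cong[OF eig, of p] fun_cong[OF eig, of q] sym
      unfolding mvec_Hop_two_sites[OF supp assms(2-4) v(1)] H_def by auto
    ultimately show "\<mu> \<in> {\<mu>. \<exists>x y. (x \<noteq> 0 \<or> y \<noteq> 0) \<and> H p p * x + H p q * y = \<mu> * x \<and> H p q * x + H q q * y = \<mu> * y}"
      by blast
  next
    assume "\<mu> \<in> {\<mu>. \<exists>x y. (x \<noteq> 0 \<or> y \<noteq> 0) \<and> H p p * x + H p q * y = \<mu> * x \<and> H p q * x + H q q * y = \<mu> * y}"
    then obtain x y where nz: "x \<noteq> 0 \<or> y \<noteq> 0"
      and e: "H p p * x + H p q * y = \<mu> * x" "H p q * x + H q q * y = \<mu> * y" by blast
    define v where "v = (\<lambda>i. if i = p then x else if i = q then y else (0::real))"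
    have v: "v \<in> subsp a" unfolding subsp_def v_def using supp by auto
    moreover have "v \<noteq> (\<lambda>_. 0)"
      using nz \<open>p \<noteq> q\<close> by (auto simp: v_def fun_eq_iff split: if_splits)
    moreover have "mvec L (Hop L lam a) v = (\<lambda>i. \<mu> * v i)"
      unfolding mvec_Hop_two_sites[OF supp assms(2-4) v] using e sym \<open>p \<noteq> q\<close>
      by (auto simp: v_def H_def fun_eq_iff)
    ultimately show "\<mu> \<in> restr_eigenvalues L lam a" unfolding restr_eigenvalues_def by blast
  }
qed

lemma LambdaMax_two_sites:
  fixes lam :: real
  assumes "\<And>i. a i = 1 \<longleftrightarrow> i = p \<or> i = q" and "p \<noteq> q" "p \<in> {1..L}" "q \<in> {1..L}"
  defines "H \<equiv> unprojected_Hop L lam a"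
  shows "LambdaMax L lam a = (H p p + H q q) / 2 + sqrt (((H p p - H q q) / 2)\<^sup>2 + (H p q)\<^sup>2)"
  unfolding LambdaMax_def restr_eigenvalues_two_sites[OF assms(1-4)] H_def sym2_eigenvalues
  by (simp add: max_def)

lemma unprojected_Hop_two_sites:
  fixes lam :: real
  assumes supp: "\<And>i. a i = 1 \<longleftrightarrow> i = p \<or> i = q" and "p < q" "1 \<le> p" "q \<le> L" "L \<ge> 3"
  defines "H \<equiv> unprojected_Hop L lam a"
  shows "H p p = (if q = p + 1 then (if p = 1 then 1 else 1/2) else 0) - lam / 2"
    and "H q q = (if q = p + 1 then (if q = L then 1 else 1/2) else 0) - lam / 2"
    and "H p q = (if q = p + 1 then (if p = 1 \<or> p = L - 1 then lam / (2 * sqrt 2) else lam / 4) else 0)"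
proof -
  have "delta (a i) 1 = (if i = p \<or> i = q then 1 else 0)" for i using supp by (simp add: delta_def)
  then show "H p p = (if q = p + 1 then (if p = 1 then 1 else 1/2) else 0) - lam / 2"
    and "H q q = (if q = p + 1 then (if q = L then 1 else 1/2) else 0) - lam / 2"
    and "H p q = (if q = p + 1 then (if p = 1 \<or> p = L - 1 then lam / (2 * sqrt 2) else lam / 4) else 0)"
    using assms(2-5) unfolding H_def unprojected_Hop_def PiPh_def PiOp_def by auto
qed

lemma top_eigenvalue_bound:
  fixes \<alpha> \<beta> \<gamma> lam :: real
  assumes "\<alpha> + \<gamma> \<le> 3/2 - lam" "((\<alpha> - \<gamma>) / 2)\<^sup>2 \<le> 1/16" "\<beta>\<^sup>2 \<le> lam\<^sup>2 / 8"
  shows "(\<alpha> + \<gamma>) / 2 + sqrt (((\<alpha> - \<gamma>) / 2)\<^sup>2 + \<beta>\<^sup>2) \<le> (3 - 2 * lam + sqrt (1 + 2 * lam\<^sup>2)) / 4"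
proof -
  have "sqrt (((\<alpha> - \<gamma>) / 2)\<^sup>2 + \<beta>\<^sup>2) \<le> sqrt ((1 + 2 * lam\<^sup>2) / 16)"
    using assms by (intro real_sqrt_le_mono) auto
  also have "\<dots> = sqrt (1 + 2 * lam\<^sup>2) / 4" by (simp add: real_sqrt_divide)
  finally show ?thesis using assms(1) by (simp add: field_simps)
qed

lemma LambdaMax_le:
  assumes "\<And>i. a i = 1 \<longleftrightarrow> i = p \<or> i = q" and "p < q" "1 \<le> p" "q \<le> L" "L \<ge> 3"
  shows "LambdaMax L lam a \<le> (3 - 2 * lam + sqrt (1 + 2 * lam\<^sup>2)) / 4"
proof -
  have sites: "p \<noteq> q" "p \<in> {1..L}" "q \<in> {1..L}" using assms(2-4) by auto
  show ?thesis
    unfolding LambdaMax_two_sites[OF assms(1) sites] unprojected_Hop_two_sites[OF assms]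
    using assms(2-5) by (intro top_eigenvalue_bound) (auto simp: power_divide power_mult_distrib)
qed

lemma LambdaMax_boundary_pair:
  assumes "\<And>i. a i = 1 \<longleftrightarrow> i = 1 \<or> i = 2" and "L \<ge> 3"
  shows "LambdaMax L lam a = (3 - 2 * lam + sqrt (1 + 2 * lam\<^sup>2)) / 4"
proof -
  have "sqrt (((1 - lam / 2 - (1/2 - lam / 2)) / 2)\<^sup>2 + (lam / (2 * sqrt 2))\<^sup>2) = sqrt ((1 + 2 * lam\<^sup>2) / 16)"
    by (simp add: power_divide power_mult_distrib)
  also have "\<dots> = sqrt (1 + 2 * lam\<^sup>2) / 4" by (simp add: real_sqrt_divide)
  moreover have sites: "(1::nat) \<noteq> 2" "1 \<in> {1..L}" "2 \<in> {1..L}" "(1::nat) < 2" "1 \<le> (1::nat)" "2 \<le> L"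
    using assms(2) by auto
  ultimately show ?thesis
    using assms(2)
    unfolding LambdaMax_two_sites[OF assms(1) sites(1-3)] unprojected_Hop_two_sites[OF assms(1) sites(4-6) assms(2)]
    by (simp add: field_simps)
qed

lemma weight_two_support:
  assumes "a \<in> bitstrings L" "wt L a = 2"
  obtains p q where "\<And>i. a i = 1 \<longleftrightarrow> i = p \<or> i = q" "p < q" "1 \<le> p" "q \<le> L"
proof -
  obtain p q where "p < q" and supp: "{i \<in> {1..L}. a i = 1} = {p, q}"
    using assms(2) unfolding wt_def card_2_iff by (metis insert_commute linorder_neqE_nat)
  moreover have sites: "p \<in> {1..L}" "q \<in> {1..L}" using supp by blast+
  moreover have "a i = 1 \<longleftrightarrow> i = p \<or> i = q" for i
  proof (cases "i \<in> {1..L}")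
    case True
    then show ?thesis using supp by blast
  next
    case False
    then show ?thesis using assms(1) sites unfolding bitstrings_def by auto
  qed
  ultimately show thesis by (intro that[of p q]) auto
qed

lemma finite_bitstrings: "finite (bitstrings L)"
proof (rule finite_subset)
  show "bitstrings L \<subseteq> (\<lambda>f i. if i \<in> {1..L} then f i else 0) ` PiE {1..L} (\<lambda>_. {0, 1::nat})"
  proof
    fix a assume a: "a \<in> bitstrings L"
    then have "a = (\<lambda>i. if i \<in> {1..L} then restrict a {1..L} i else 0)"
      and "restrict a {1..L} \<in> PiE {1..L} (\<lambda>_. {0, 1})"
      unfolding bitstrings_def by (auto simp: fun_eq_iff)
    then show "a \<in> (\<lambda>f i. if i \<in> {1..L} then f i else 0) ` PiE {1..L} (\<lambda>_. {0, 1::nat})" by blast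
  qed
qed (intro finite_imageI finite_PiE, auto)

lemma Omega1_formula_nonneg:
  fixes lam :: real
  assumes "lam \<le> 3 + sqrt 5"
  shows "(3 - 2 * lam + sqrt (1 + 2 * lam\<^sup>2)) / 4 \<ge> 0"
proof (cases "2 * lam \<le> 3")
  case False
  \<comment> \<open>\<open>(2\<lambda> - 3)\<^sup>2 \<le> 1 + 2\<lambda>\<^sup>2\<close> amounts to \<open>(\<lambda> - 3)\<^sup>2 \<le> 5\<close>.\<close>
  have "sqrt 5 \<ge> 2" by (simp add: real_le_rsqrt)
  with assms False have "(sqrt 5 - (lam - 3)) * (sqrt 5 + (lam - 3)) \<ge> 0"
    by (intro mult_nonneg_nonneg) auto
  then have "(2 * lam - 3)\<^sup>2 \<le> 1 + 2 * lam\<^sup>2" by (simp add: algebra_simps power2_eq_square)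
  then have "sqrt ((2 * lam - 3)\<^sup>2) \<le> sqrt (1 + 2 * lam\<^sup>2)" by (rule real_sqrt_le_mono)
  with False show ?thesis by simp
qed simp

theorem lemma1:
  fixes L :: nat and lam :: real
  assumes "L \<ge> 3" and "lam > 0"
  shows "Omega1 L lam = (3 - 2 * lam + sqrt (1 + 2 * lam\<^sup>2)) / 4
         \<and> (lam \<le> 3 + sqrt 5 \<longrightarrow> Omega1 L lam \<ge> 0)"
proof -
  define S where "S = {LambdaMax L lam a | a. a \<in> bitstrings L \<and> wt L a = 2}"
  have "finite S"
    unfolding S_def by (rule finite_subset[OF _ finite_imageI[OF finite_bitstrings]]) auto
  moreover have "\<Lambda> \<le> (3 - 2 * lam + sqrt (1 + 2 * lam\<^sup>2)) / 4" if "\<Lambda> \<in> S" for \<Lambda>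
  proof -
    from \<open>\<Lambda> \<in> S\<close> obtain a where a: "a \<in> bitstrings L" "wt L a = 2" and "\<Lambda> = LambdaMax L lam a"
      unfolding S_def by blast
    from a show ?thesis
    proof (rule weight_two_support)
      fix p q assume "\<And>i. a i = 1 \<longleftrightarrow> i = p \<or> i = q" "p < q" "1 \<le> p" "q \<le> L"
      from LambdaMax_le[OF this assms(1)] show ?thesis using \<open>\<Lambda> = LambdaMax L lam a\<close> by simp
    qed
  qed
  moreover have "(3 - 2 * lam + sqrt (1 + 2 * lam\<^sup>2)) / 4 \<in> S"
  proof -
    define a where "a = (\<lambda>i::nat. if i = 1 \<or> i = 2 then 1 else (0::nat))"
    have "{i \<in> {1..L}. a i = 1} = {1, 2}" using assms(1) by (auto simp: a_def)
    then have "wt L a = 2" unfolding wt_def by simp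
    moreover have "a \<in> bitstrings L" unfolding bitstrings_def a_def using assms(1) by auto
    moreover have "LambdaMax L lam a = (3 - 2 * lam + sqrt (1 + 2 * lam\<^sup>2)) / 4"
      using assms(1) by (intro LambdaMax_boundary_pair) (auto simp: a_def)
    ultimately show ?thesis unfolding S_def by (intro CollectI exI[of _ a]) simp
  qed
  ultimately have "Omega1 L lam = (3 - 2 * lam + sqrt (1 + 2 * lam\<^sup>2)) / 4"
    unfolding Omega1_def S_def[symmetric] by (rule Max_eqI)
  with Omega1_formula_nonneg show ?thesis by metis
qed

end
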